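(* Let $(A,+,\circ)$ be a finite left brace with cyclic additive group, let $g$ be an element of a transitive cycle base of $A$, and let $(A,\bullet)$ be the cycle set given by $a\bullet b:=\lambda_a(g)^{-}\circ b$. Let $H$ be the subgroup of $(A,\circ)$ such that $\mathrm{Ret}(A,\bullet)=A/H$ (namely $H=\{h\in A\mid\lambda_h(g)=g\}$). Then $H=\mathrm{Soc}(A)$.
   Context: A left brace is a set $A$ with two operations such that $(A,+)$ is an abelian group, $(A,\circ)$ is a group, and $a\circ(b+c)=a\circ b-a+a\circ c$. $\lambda_a(b):=-a+a\circ b$; $a\mapsto\lambda_a$ is a homomorphism $(A,\circ)\to\mathrm{Aut}(A,+)$. $a^{-}$ is the inverse of $a$ in $(A,\circ)$. $\mathrm{Soc}(A):=\{a\mid\lambda_a=\mathrm{id}_A\}$. A transitive cycle base is a single $\lambda$-orbit generating $(A,+)$. For a cycle set (left multiplications $\sigma_x$ bijective, $(x\cdot y)\cdot(x\cdot z)=(y\cdot x)\cdot(y\cdot z)$), $\mathrm{Ret}(X)$ is the quotient by $x\sim y\iff\sigma_x=\sigma_y$; for $(A,\bullet)$ its classes are the left cosets $a\circ H$. *)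

theory Defs
  imports "HOL-Algebra.Algebra"
begin

definition left_brace :: "'a monoid \<Rightarrow> 'a monoid \<Rightarrow> bool" where
  "left_brace P M \<longleftrightarrow> comm_group P \<and> group M \<and> carrier P = carrier M \<and>
     (\<forall>a\<in>carrier M. \<forall>b\<in>carrier P. \<forall>c\<in>carrier P.
        a \<otimes>\<^bsub>M\<^esub> (b \<otimes>\<^bsub>P\<^esub> c) =
        ((a \<otimes>\<^bsub>M\<^esub> b) \<otimes>\<^bsub>P\<^esub> inv\<^bsub>P\<^esub> a) \<otimes>\<^bsub>P\<^esub> (a \<otimes>\<^bsub>M\<^esub> c))"

definition brace_lambda :: "'a monoid \<Rightarrow> 'a monoid \<Rightarrow> 'a \<Rightarrow> 'a \<Rightarrow> 'a" where
  "brace_lambda P M a b = inv\<^bsub>P\<^esub> a \<otimes>\<^bsub>P\<^esub> (a \<otimes>\<^bsub>M\<^esub> b)"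

definition brace_socle :: "'a monoid \<Rightarrow> 'a monoid \<Rightarrow> 'a set" where
  "brace_socle P M = {a \<in> carrier M. \<forall>b\<in>carrier P. brace_lambda P M a b = b}"

definition transitive_cycle_base :: "'a monoid \<Rightarrow> 'a monoid \<Rightarrow> 'a set \<Rightarrow> bool" where
  "transitive_cycle_base P M B \<longleftrightarrow>
     (\<exists>y\<in>carrier P. B = (\<lambda>a. brace_lambda P M a y) ` carrier M) \<and>
     generate P B = carrier P"

end

theory Submission
  imports Defs
begin

text \<open>Every endomorphism of a cyclic group is a power map \<open>x \<mapsto> x\<^sup>m\<close>, so it commutes
  with every other endomorphism. If \<open>\<lambda>\<^sub>h(g) = g\<close>, then \<open>\<lambda>\<^sub>h\<close> also fixes
  \<open>\<lambda>\<^sub>a(g) = \<lambda>\<^sub>a(\<lambda>\<^sub>h(g)) = \<lambda>\<^sub>h(\<lambda>\<^sub>a(g))\<close> for every \<open>a\<close>, i.e. the whole \<open>\<lambda>\<close>-orbit of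
  \<open>g\<close>. As \<open>a \<mapsto> \<lambda>\<^sub>a\<close> is a homomorphism, this orbit is the transitive cycle base
  containing \<open>g\<close>, which generates \<open>(A,+)\<close>; hence \<open>\<lambda>\<^sub>h = id\<close>.\<close>

lemma (in group) hom_eq_on_generate:
  assumes "group H" "f \<in> hom G H" "h \<in> hom G H" "S \<subseteq> carrier G"
    and "\<And>x. x \<in> S \<Longrightarrow> f x = h x" "x \<in> generate G S"
  shows "f x = h x"
proof -
  interpret f: group_hom G H f using assms by (simp add: group_hom_def group_hom_axioms_def)
  interpret h: group_hom G H h using assms by (simp add: group_hom_def group_hom_axioms_def)
  from assms(6) show ?thesis
  proof (induction rule: generate.induct)
    case (eng x y)
    then show ?case using generate_in_carrier[OF assms(4)] by simp
  qed (use assms(4,5) in auto)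
qed

lemma (in group) cyclic_group_endomorphism_is_power:
  assumes "cyclic_group G" "f \<in> hom G G"
  obtains m :: int where "\<And>x. x \<in> carrier G \<Longrightarrow> f x = x [^] m"
proof -
  obtain c where c: "c \<in> carrier G" "carrier G = range (\<lambda>n::int. c [^] n)"
    using assms(1) cyclic_group by blast
  then obtain m :: int where m: "f c = c [^] m"
    using hom_in_carrier[OF assms(2)] by blast
  have "f x = x [^] m" if "x \<in> carrier G" for x
  proof -
    obtain k :: int where k: "x = c [^] k" using c(2) \<open>x \<in> carrier G\<close> by blast
    have "f x = (c [^] m) [^] k"
      unfolding k m[symmetric] by (rule hom_int_pow[OF assms(2) c(1) is_group is_group])
    also have "\<dots> = x [^] m"
      unfolding k using c(1) by (simp add: int_pow_pow mult.commute)
    finally show ?thesis .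
  qed
  then show ?thesis by (rule that)
qed

lemma (in group) cyclic_group_endomorphisms_commute:
  assumes "cyclic_group G" "f \<in> hom G G" "h \<in> hom G G" "x \<in> carrier G"
  shows "f (h x) = h (f x)"
proof -
  obtain m :: int where m: "\<And>y. y \<in> carrier G \<Longrightarrow> h y = y [^] m"
    using cyclic_group_endomorphism_is_power[OF assms(1,3)] by blast
  have "f (h x) = f x [^] m"
    using m assms(4) hom_int_pow[OF assms(2) assms(4) is_group is_group] by simp
  also have "\<dots> = h (f x)"
    using m hom_in_carrier[OF assms(2,4)] by simp
  finally show ?thesis .
qed

locale brace =
  fixes P M :: "'a monoid"
  assumes left_brace: "left_brace P M"
begin

sublocale P: comm_group P
  using left_brace by (simp add: left_brace_def)

sublocale M: group M
  using left_brace by (simp add: left_brace_def)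

lemma carrier_M [simp]: "carrier M = carrier P"
  using left_brace by (simp add: left_brace_def)

lemma M_mult_closed [simp]: "\<lbrakk>a \<in> carrier P; b \<in> carrier P\<rbrakk> \<Longrightarrow> a \<otimes>\<^bsub>M\<^esub> b \<in> carrier P"
  using M.m_closed by simp

lemma M_inv_closed [simp]: "a \<in> carrier P \<Longrightarrow> inv\<^bsub>M\<^esub> a \<in> carrier P"
  using M.inv_closed by simp

lemma brace_distrib:
  "\<lbrakk>a \<in> carrier P; b \<in> carrier P; c \<in> carrier P\<rbrakk> \<Longrightarrow>
    a \<otimes>\<^bsub>M\<^esub> (b \<otimes>\<^bsub>P\<^esub> c) = ((a \<otimes>\<^bsub>M\<^esub> b) \<otimes>\<^bsub>P\<^esub> inv\<^bsub>P\<^esub> a) \<otimes>\<^bsub>P\<^esub> (a \<otimes>\<^bsub>M\<^esub> c)"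
  using left_brace by (simp add: left_brace_def)

lemma lambda_hom: "a \<in> carrier M \<Longrightarrow> brace_lambda P M a \<in> hom P P"
  by (rule homI) (simp_all add: brace_lambda_def brace_distrib P.m_assoc)

lemma lambda_mult:
  assumes "a \<in> carrier M" "b \<in> carrier M" "c \<in> carrier P"
  shows "brace_lambda P M a (brace_lambda P M b c) = brace_lambda P M (a \<otimes>\<^bsub>M\<^esub> b) c"
proof -
  interpret lambda_a: group_hom P P "brace_lambda P M a"
    using lambda_hom[OF assms(1)] by (simp add: group_hom_def group_hom_axioms_def P.is_group)
  have "brace_lambda P M a (brace_lambda P M b c)
      = inv\<^bsub>P\<^esub> brace_lambda P M a b \<otimes>\<^bsub>P\<^esub> brace_lambda P M a (b \<otimes>\<^bsub>M\<^esub> c)"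
    using assms by (simp add: brace_lambda_def[of P M b])
  also have "\<dots> = inv\<^bsub>P\<^esub> (a \<otimes>\<^bsub>M\<^esub> b) \<otimes>\<^bsub>P\<^esub> (a \<otimes>\<^bsub>M\<^esub> (b \<otimes>\<^bsub>M\<^esub> c))"
    using assms by (simp add: brace_lambda_def P.inv_mult P.m_ac)
      (simp add: P.m_assoc[symmetric])
  also have "\<dots> = brace_lambda P M (a \<otimes>\<^bsub>M\<^esub> b) c"
    using assms by (simp add: brace_lambda_def M.m_assoc)
  finally show ?thesis .
qed

lemma lambda_orbit_subset:
  assumes "y \<in> carrier P" "g \<in> (\<lambda>a. brace_lambda P M a y) ` carrier M"
  shows "(\<lambda>a. brace_lambda P M a y) ` carrier M \<subseteq> (\<lambda>a. brace_lambda P M a g) ` carrier M"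
proof
  fix b assume "b \<in> (\<lambda>a. brace_lambda P M a y) ` carrier M"
  then obtain a where a: "a \<in> carrier M" "b = brace_lambda P M a y" by blast
  obtain a0 where a0: "a0 \<in> carrier M" "g = brace_lambda P M a0 y" using assms(2) by blast
  have "brace_lambda P M (a \<otimes>\<^bsub>M\<^esub> inv\<^bsub>M\<^esub> a0) g
      = brace_lambda P M (a \<otimes>\<^bsub>M\<^esub> inv\<^bsub>M\<^esub> a0 \<otimes>\<^bsub>M\<^esub> a0) y"
    using a(1) a0 assms(1) by (simp add: lambda_mult)
  also have "\<dots> = b"
    using a a0(1) by (simp add: M.m_assoc)
  finally have "b = brace_lambda P M (a \<otimes>\<^bsub>M\<^esub> inv\<^bsub>M\<^esub> a0) g" ..
  then show "b \<in> (\<lambda>a. brace_lambda P M a g) ` carrier M"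
    using a(1) a0(1) by blast
qed

lemma transitive_cycle_base_subset:
  assumes "transitive_cycle_base P M B"
  shows "B \<subseteq> carrier P"
proof -
  obtain y where "y \<in> carrier P" "B = (\<lambda>a. brace_lambda P M a y) ` carrier M"
    using assms unfolding transitive_cycle_base_def by blast
  then show ?thesis
    using hom_in_carrier[OF lambda_hom] by blast
qed

lemma stabilizer_of_cycle_base_element_in_socle:
  assumes "cyclic_group P" "transitive_cycle_base P M B" "g \<in> B"
    and "h \<in> carrier M" "brace_lambda P M h g = g"
  shows "h \<in> brace_socle P M"
proof -
  obtain y where y: "y \<in> carrier P" "B = (\<lambda>a. brace_lambda P M a y) ` carrier M"
    and gen: "generate P B = carrier P"
    using assms(2) unfolding transitive_cycle_base_def by blast
  have B_carrier: "B \<subseteq> carrier P"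
    using transitive_cycle_base_subset[OF assms(2)] .
  have fixes_B: "brace_lambda P M h b = id b" if "b \<in> B" for b
  proof -
    have "b \<in> (\<lambda>a. brace_lambda P M a g) ` carrier M"
      using lambda_orbit_subset[OF y(1) assms(3)[unfolded y(2)]] that[unfolded y(2)] ..
    then obtain a where a: "a \<in> carrier M" "b = brace_lambda P M a g" by blast
    have "brace_lambda P M h (brace_lambda P M a g) = brace_lambda P M a (brace_lambda P M h g)"
      using assms(3) B_carrier
      by (intro P.cyclic_group_endomorphisms_commute[OF assms(1) lambda_hom lambda_hom])
        (use assms(4) a(1) in auto)
    then show ?thesis
      using assms(5) a(2) by simp
  qed
  have "brace_lambda P M h x = id x" if "x \<in> carrier P" for x
    by (rule P.hom_eq_on_generate[OF P.is_group lambda_hom[OF assms(4)]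
          iso_imp_homomorphism[OF id_iso] B_carrier fixes_B])
      (use that gen in simp_all)
  then show ?thesis
    using assms(4) by (simp add: brace_socle_def)
qed

end

theorem mainTheorem3:
  fixes P M :: "'a monoid" and B :: "'a set" and g :: 'a
  assumes "left_brace P M"
    and "finite (carrier P)"
    and "cyclic_group P"
    and "transitive_cycle_base P M B"
    and "g \<in> B"
  shows "{h \<in> carrier M. brace_lambda P M h g = g} = brace_socle P M"
proof -
  interpret brace P M
    using assms(1) by (rule brace.intro)
  have "g \<in> carrier P"
    using transitive_cycle_base_subset[OF assms(4)] assms(5) by blast
  then show ?thesis
    using stabilizer_of_cycle_base_element_in_socle[OF assms(3,4,5)]
    by (auto simp: brace_socle_def)
qed

end
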